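(* Let $U_1,U_2$ be two users at fixed positions $(x_1,y_1),(x_2,y_2)\in\mathbb{R}^2$ with distances $d_k=\sqrt{x_k^2+y_k^2}$ from a base station at the origin, where $d_1<d_2$. Let the estimated positions be $(\hat x_k,\hat y_k)$ with $\hat x_k\sim\mathcal N(x_k,\sigma_{ob}^2)$, $\hat y_k\sim\mathcal N(y_k,\sigma_{ob}^2)$, $\sigma_{ob}>0$, all four estimates mutually independent, and let $\hat d_k=\sqrt{\hat x_k^2+\hat y_k^2}$. Then, in the fading-free scenario, the decoding order error probability is $$P_e^1=\Pr\{\hat d_1>\hat d_2\}=\sum_{i=0}^{\infty}\sum_{j=0}^{\infty}P_{\lambda_1\beta}(i)\,P_{\lambda_2\beta}(j)\,I_{i,j},$$ where $\beta=\frac{1}{2\sigma_{ob}^2}$, $\lambda_k=d_k^2$ ($k=1,2$), $P_{\mu}(n)=\frac{e^{-\mu}\mu^n}{n!}$ ($n\ge 0$) is the Poisson probability mass function with mean $\mu$, and $$I_{i,j}=\left(\tfrac12\right)^{(i+1)+(j+1)}\binom{(i+1)+(j+1)-1}{j+1}\,F\!\left(1,(i+1)+(j+1);(j+1)+1;\tfrac12\right),$$ with $F(a,b;c;z)$ the Gauss hypergeometric function.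
   Context: In the fading-free scenario the channel gain of user $U_k$ is $d_k^{-\alpha}$ (path loss only), so since $d_1<d_2$ the correct (channel-based) decoding order has $U_1$ as the stronger user; a decoding order error occurs exactly when the estimated distances are in the wrong order, i.e. $\hat d_1>\hat d_2$. In the paper the exponents are written $\alpha_i=i+1$ and $\alpha_j=j+1$. *)

theory Defs
  imports "HOL-Probability.Probability"
begin

definition poisson_pmf_val :: "real \<Rightarrow> nat \<Rightarrow> real" where
  "poisson_pmf_val mu n = exp (- mu) * mu ^ n / fact n"

definition hyp2F1 :: "real \<Rightarrow> real \<Rightarrow> real \<Rightarrow> real \<Rightarrow> real" where
  "hyp2F1 a b c z = (\<Sum>n. pochhammer a n * pochhammer b n / (pochhammer c n * fact n) * z ^ n)"

end

theory Submission
  imports Defs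
begin

text \<open>With \<beta> = 1 / (2\<sigma>^2), the scaled squared estimated distance \<beta> (X_k^2 + Y_k^2) is
  noncentral chi-square with two degrees of freedom, i.e. a Poisson(\<lambda>_k \<beta>) mixture of Erlang
  laws. Per coordinate this comes from folding the normal density onto the half-line: the sum of
  its two tails is a cosh, whose even power series is a Poisson mixture of Gamma(k + 1/2)
  densities; adding the two coordinates convolves the Poisson weights and turns two
  half-integer Gamma laws into an Erlang law. Conditioning on both Poisson indices, the error
  probability becomes the probability that one Erlang variable exceeds an independent one.
  Expanding the Erlang CDF as a Poisson tail turns this into a negative binomial series, which is
  the stated hypergeometric value I_{i,j}.\<close>

section \<open>Nonnegative series and integrals\<close>

lemma suminf_ennreal_swap: "(\<Sum>i. \<Sum>j. f i j :: ennreal) = (\<Sum>j. \<Sum>i. f i j)"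
proof -
  have "(\<Sum>i. \<Sum>j. f i j) = (\<Sum>i. \<integral>\<^sup>+j. f i j \<partial>count_space UNIV)"
    by (simp add: nn_integral_count_space_nat)
  also have "\<dots> = (\<integral>\<^sup>+j. (\<Sum>i. f i j) \<partial>count_space UNIV)"
    by (rule nn_integral_suminf[symmetric]) auto
  also have "\<dots> = (\<Sum>j. \<Sum>i. f i j)"
    by (simp add: nn_integral_count_space_nat)
  finally show ?thesis .
qed

lemma suminf_ennreal_diagonal:
  fixes f :: "nat \<Rightarrow> nat \<Rightarrow> ennreal"
  shows "(\<Sum>k. \<Sum>l. f k l) = (\<Sum>n. \<Sum>k\<le>n. f k (n - k))"
proof -
  let ?g = "\<lambda>k n. if k \<le> n then f k (n - k) else 0"
  have shift: "(\<Sum>l. f k l) = (\<Sum>n. ?g k n)" for k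
  proof -
    have "(\<Sum>l. ?g k (l + k)) = (\<Sum>n. ?g k n)"
      by (rule suminf_mono_reindex[unfolded o_def])
         (auto simp: strict_mono_def image_iff, metis le_add_diff_inverse2)
    then show ?thesis by simp
  qed
  have "(\<Sum>k. \<Sum>l. f k l) = (\<Sum>n. \<Sum>k. ?g k n)"
    unfolding shift by (rule suminf_ennreal_swap)
  also have "\<dots> = (\<Sum>n. \<Sum>k\<le>n. f k (n - k))"
    by (intro suminf_cong, subst suminf_finite[of "{..n}" for n]) auto
  finally show ?thesis .
qed

lemma enn2real_suminf_suminf:
  fixes f :: "nat \<Rightarrow> nat \<Rightarrow> real"
  assumes nonneg: "\<And>i j. 0 \<le> f i j" and finite: "(\<Sum>i. \<Sum>j. ennreal (f i j)) \<noteq> \<top>"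
  shows "enn2real (\<Sum>i. \<Sum>j. ennreal (f i j)) = (\<Sum>i. \<Sum>j. f i j)"
proof -
  have "(\<Sum>j. ennreal (f i j)) \<le> (\<Sum>i. \<Sum>j. ennreal (f i j))" for i
    using sum_le_suminf[of "\<lambda>i. \<Sum>j. ennreal (f i j)" "{i}"] by simp
  then have "(\<Sum>j. ennreal (f i j)) \<noteq> \<top>" for i
    using finite by (metis top_unique)
  then have "summable (f i)" for i
    using nonneg by (intro summable_suminf_not_top) auto
  then have inner: "(\<Sum>j. ennreal (f i j)) = ennreal (\<Sum>j. f i j)"
    and inner_nonneg: "0 \<le> (\<Sum>j. f i j)" for i
    using nonneg by (auto intro: suminf_ennreal2 suminf_nonneg)
  have "summable (\<lambda>i. \<Sum>j. f i j)"
    using finite inner_nonneg unfolding inner by (intro summable_suminf_not_top)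
  then have "(\<Sum>i. ennreal (\<Sum>j. f i j)) = ennreal (\<Sum>i. \<Sum>j. f i j)"
    and "0 \<le> (\<Sum>i. \<Sum>j. f i j)"
    using inner_nonneg by (auto intro: suminf_ennreal2 suminf_nonneg)
  then show ?thesis
    unfolding inner by simp
qed

lemma nn_integral_mult_suminf:
  fixes f :: "'a \<Rightarrow> ennreal" and g :: "nat \<Rightarrow> 'a \<Rightarrow> ennreal"
  assumes [measurable]: "f \<in> borel_measurable M" "\<And>k. g k \<in> borel_measurable M"
  shows "(\<integral>\<^sup>+x. f x * (\<Sum>k. ennreal (p k) * g k x) \<partial>M) = (\<Sum>k. ennreal (p k) * \<integral>\<^sup>+x. f x * g k x \<partial>M)"
proof -
  have "(\<integral>\<^sup>+x. f x * (\<Sum>k. ennreal (p k) * g k x) \<partial>M) = (\<integral>\<^sup>+x. (\<Sum>k. ennreal (p k) * (f x * g k x)) \<partial>M)"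
    by (simp add: mult_ac flip: ennreal_suminf_cmult)
  also have "\<dots> = (\<Sum>k. ennreal (p k) * \<integral>\<^sup>+x. f x * g k x \<partial>M)"
    by (subst nn_integral_suminf) (auto simp: nn_integral_cmult)
  finally show ?thesis .
qed

lemma lborel_nn_integral_mult_swap:
  fixes f g :: "real \<Rightarrow> ennreal" and K :: "real \<Rightarrow> real \<Rightarrow> ennreal"
  assumes [measurable]: "f \<in> borel_measurable borel" "g \<in> borel_measurable borel"
    and [measurable]: "case_prod K \<in> borel_measurable (lborel \<Otimes>\<^sub>M lborel)"
  shows "(\<integral>\<^sup>+a. f a * (\<integral>\<^sup>+t. g t * K a t \<partial>lborel) \<partial>lborel) =
         (\<integral>\<^sup>+t. g t * (\<integral>\<^sup>+a. f a * K a t \<partial>lborel) \<partial>lborel)"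
proof -
  have "(\<integral>\<^sup>+a. f a * (\<integral>\<^sup>+t. g t * K a t \<partial>lborel) \<partial>lborel) =
        (\<integral>\<^sup>+a. \<integral>\<^sup>+t. g t * (f a * K a t) \<partial>lborel \<partial>lborel)"
    by (intro nn_integral_cong) (simp add: mult.left_commute flip: nn_integral_cmult)
  also have "\<dots> = (\<integral>\<^sup>+t. \<integral>\<^sup>+a. g t * (f a * K a t) \<partial>lborel \<partial>lborel)"
    by (rule lborel_pair.Fubini') simp
  finally show ?thesis
    by (simp add: nn_integral_cmult)
qed

lemma nn_integral_lborel_fold:
  fixes F :: "real \<Rightarrow> ennreal"
  assumes F[measurable]: "F \<in> borel_measurable borel"
  shows "(\<integral>\<^sup>+a. F a \<partial>lborel) = (\<integral>\<^sup>+a. (F a + F (- a)) * indicator {0<..} a \<partial>lborel)"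
proof -
  have "(\<integral>\<^sup>+a. F a * indicator {..0} a \<partial>lborel) =
        (\<integral>\<^sup>+a. F a * indicator {..0} a \<partial>distr lborel borel uminus)"
    by (simp add: lborel_distr_uminus)
  also have "\<dots> = (\<integral>\<^sup>+a. F (- a) * indicator {0..} a \<partial>lborel)"
    by (subst nn_integral_distr) (auto intro!: nn_integral_cong simp: indicator_def)
  also have "\<dots> = (\<integral>\<^sup>+a. F (- a) * indicator {0<..} a \<partial>lborel)"
    by (intro nn_integral_cong_AE eventually_mono[OF AE_lborel_singleton[of 0]])
       (auto simp: indicator_def)
  finally have neg: "(\<integral>\<^sup>+a. F a * indicator {..0} a \<partial>lborel) =
                     (\<integral>\<^sup>+a. F (- a) * indicator {0<..} a \<partial>lborel)" .
  have "(\<integral>\<^sup>+a. F a \<partial>lborel) =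
        (\<integral>\<^sup>+a. F a * indicator {0<..} a + F a * indicator {..0} a \<partial>lborel)"
    by (intro nn_integral_cong) (auto simp: indicator_def)
  also have "\<dots> = (\<integral>\<^sup>+a. F a * indicator {0<..} a \<partial>lborel) + (\<integral>\<^sup>+a. F (- a) * indicator {0<..} a \<partial>lborel)"
    by (subst nn_integral_add) (auto simp: neg)
  also have "\<dots> = (\<integral>\<^sup>+a. (F a + F (- a)) * indicator {0<..} a \<partial>lborel)"
    by (subst nn_integral_add[symmetric]) (auto simp: distrib_right)
  finally show ?thesis .
qed

lemma emeasure_atLeast_0_SUP:
  fixes N :: "real measure" and b :: "nat \<Rightarrow> real"
  assumes "sets N = sets borel" and "incseq b" and "\<And>t. \<exists>n. t \<le> b n"
  shows "emeasure N {0..} = (SUP n. emeasure N {0..b n})"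
proof -
  have "(\<Union>n. {0..b n}) = {0..}"
  proof (intro equalityI subsetI)
    fix t :: real assume "t \<in> {0..}"
    moreover obtain n where "t \<le> b n"
      using assms(3) by blast
    ultimately show "t \<in> (\<Union>n. {0..b n})"
      by auto
  qed auto
  moreover have "incseq (\<lambda>n. {0..b n})"
  proof (rule monoI)
    fix m n :: nat assume "m \<le> n"
    with \<open>incseq b\<close> have "b m \<le> b n"
      by (rule monoD)
    then show "{0..b m} \<subseteq> {0..b n}"
      by auto
  qed
  moreover have "range (\<lambda>n. {0..b n}) \<subseteq> sets N"
    using \<open>sets N = sets borel\<close> by (simp add: image_subset_iff)
  ultimately show ?thesis
    using SUP_emeasure_incseq[of "\<lambda>n. {0..b n}" N] by simp
qed

lemma nn_integral_substitution_square:
  fixes f :: "real \<Rightarrow> ennreal" and c :: real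
  assumes c: "c > 0" and f[measurable]: "f \<in> borel_measurable borel"
  shows "(\<integral>\<^sup>+t. f t * indicator {0..} t \<partial>lborel) =
         (\<integral>\<^sup>+a. f (c * a\<^sup>2) * ennreal (2 * c * a) * indicator {0..} a \<partial>lborel)"
proof -
  define g where "g a = f (c * a\<^sup>2) * ennreal (2 * c * a)" for a
  have g[measurable]: "g \<in> borel_measurable borel"
    unfolding g_def by measurable
  have deriv: "((\<lambda>a. c * a\<^sup>2) has_real_derivative 2 * c * a) (at a)" for a
    by (auto intro!: derivative_eq_intros)
  have bounded: "emeasure (density lborel f) {0..c * (real n + 1)\<^sup>2} =
                 emeasure (density lborel g) {0..real n + 1}" for n :: nat
    using nn_integral_substitution_aux[OF f _ deriv, of 0 "real n + 1"] c
    by (auto simp: emeasure_density g_def intro!: continuous_intros)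
  have unbounded: "\<exists>n. t \<le> c * (real n + 1)\<^sup>2" for t
  proof -
    obtain n :: nat where "t / c \<le> real n"
      using real_arch_simple by blast
    then have "t \<le> c * real n"
      using c by (simp add: field_simps)
    also have "\<dots> \<le> c * (real n + 1)\<^sup>2"
      using c by (intro mult_left_mono) (auto simp: power2_eq_square algebra_simps)
    finally show ?thesis ..
  qed
  have "emeasure (density lborel f) {0..} = (SUP n. emeasure (density lborel f) {0..c * (real n + 1)\<^sup>2})"
    using c unbounded
    by (intro emeasure_atLeast_0_SUP) (auto simp: incseq_def intro!: mult_left_mono power_mono)
  also have "\<dots> = (SUP n. emeasure (density lborel g) {0..real n + 1})"
    by (simp only: bounded)
  also have "\<dots> = emeasure (density lborel g) {0..}"
  proof (rule emeasure_atLeast_0_SUP[symmetric])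
    fix t :: real
    obtain n :: nat where "t \<le> real n"
      using real_arch_simple by blast
    then show "\<exists>n. t \<le> real n + 1"
      by (intro exI[of _ n]) simp
  qed (simp_all add: incseq_def)
  finally show ?thesis
    by (simp add: emeasure_density g_def)
qed

section \<open>Gamma densities\<close>

definition gamma_density :: "real \<Rightarrow> real \<Rightarrow> real" where
  "gamma_density a t = (if 0 < t then t powr (a - 1) * exp (- t) / Gamma a else 0)"

lemma gamma_density_nonneg: "0 < a \<Longrightarrow> 0 \<le> gamma_density a t"
  by (auto simp: gamma_density_def intro!: divide_nonneg_pos Gamma_real_pos)

lemma borel_measurable_gamma_density[measurable]: "gamma_density a \<in> borel_measurable borel"
  unfolding gamma_density_def by measurable

lemma gamma_density_of_nat_plus_1:
  assumes "t \<noteq> 0"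
  shows "gamma_density (real k + 1) t = erlang_density k 1 t"
proof (cases "t > 0")
  case True
  have "Gamma (real k + 1) = fact k"
    using Gamma_fact[of k, where 'a=real] by (simp add: add.commute)
  moreover have "t powr real k = t ^ k"
    using True by (simp add: powr_realpow)
  ultimately show ?thesis
    using True by (simp add: gamma_density_def erlang_density_def)
qed (use assms in \<open>simp add: gamma_density_def erlang_density_def\<close>)

lemma nn_integral_powr_Beta:
  fixes a b u :: real
  assumes a: "a > 0" and b: "b > 0" and u: "u > 0"
  shows "(\<integral>\<^sup>+s. ennreal (indicator {0<..<u} s * s powr (a - 1) * (u - s) powr (b - 1)) \<partial>lborel)
         = ennreal (u powr (a + b - 1) * Beta a b)"
proof -
  let ?F = "\<lambda>s. ennreal (indicator {0<..<u} s * s powr (a - 1) * (u - s) powr (b - 1))"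
  have scale: "ennreal u * ?F (u * v) = ennreal (u powr (a + b - 1)) *
                 ennreal (indicator {0..1} v * (v powr (a - 1) * (1 - v) powr (b - 1)))" for v
  proof (cases "0 < v \<and> v < 1")
    case True
    have "u * (u * v) powr (a - 1) * (u * (1 - v)) powr (b - 1) =
          (u powr 1 * u powr (a - 1) * u powr (b - 1)) * (v powr (a - 1) * (1 - v) powr (b - 1))"
      using u True by (simp add: powr_mult mult_ac)
    also have "u powr 1 * u powr (a - 1) * u powr (b - 1) = u powr (a + b - 1)"
      using u by (simp only: powr_add[symmetric]) (simp add: algebra_simps)
    finally show ?thesis
      using True u by (simp add: indicator_def right_diff_distrib ennreal_mult'[symmetric] mult.assoc)
  next
    case False
    then have "v \<le> 0 \<or> v \<ge> 1" by auto
    then show ?thesis using u by (auto simp: indicator_def mult_le_0_iff not_less)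
  qed
  have "(\<integral>\<^sup>+s. ?F s \<partial>lborel) = (\<integral>\<^sup>+v. ?F (u * v) \<partial>distr lborel borel ((*) (1 / u)))"
    using u by (subst nn_integral_distr) (auto intro!: nn_integral_cong)
  also have "\<dots> = (\<integral>\<^sup>+v. ennreal u * ?F (u * v) \<partial>lborel)"
    using u by (simp add: lborel_distr_mult nn_integral_density)
  also have "\<dots> = ennreal (u powr (a + b - 1)) *
      (\<integral>\<^sup>+v. ennreal (indicator {0..1} v * (v powr (a - 1) * (1 - v) powr (b - 1))) \<partial>lborel)"
    unfolding scale by (subst nn_integral_cmult) auto
  also have "(\<integral>\<^sup>+v. ennreal (indicator {0..1} v * (v powr (a - 1) * (1 - v) powr (b - 1))) \<partial>lborel)
      = ennreal (Beta a b)"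
    by (rule nn_integral_has_integral_lebesgue) (use has_integral_Beta_real[OF a b] in auto)
  finally show ?thesis using u by (simp add: ennreal_mult'[symmetric])
qed

lemma nn_integral_gamma_density_convolution:
  fixes a b u :: real
  assumes a: "a > 0" and b: "b > 0"
  shows "(\<integral>\<^sup>+s. ennreal (gamma_density a s * gamma_density b (u - s)) \<partial>lborel)
         = ennreal (gamma_density (a + b) u)"
proof (cases "u > 0")
  case u: True
  have \<Gamma>: "Gamma a > 0" "Gamma b > 0" "Gamma (a + b) > 0"
    using a b by (auto intro: Gamma_real_pos)
  let ?C = "exp (- u) / (Gamma a * Gamma b)"
  have "gamma_density a s * gamma_density b (u - s) =
        ?C * (indicator {0<..<u} s * s powr (a - 1) * (u - s) powr (b - 1))" for s
  proof (cases "0 < s \<and> s < u")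
    case True
    have "exp (- s) * exp (- (u - s)) = exp (- u)" by (simp flip: exp_add)
    then show ?thesis using True by (simp add: gamma_density_def indicator_def field_simps)
  qed (auto simp: gamma_density_def indicator_def)
  then have "(\<integral>\<^sup>+s. ennreal (gamma_density a s * gamma_density b (u - s)) \<partial>lborel) =
      ennreal ?C * (\<integral>\<^sup>+s. ennreal (indicator {0<..<u} s * s powr (a - 1) * (u - s) powr (b - 1)) \<partial>lborel)"
    using \<Gamma> by (subst nn_integral_cmult[symmetric]) (auto simp: ennreal_mult'[symmetric])
  also have "\<dots> = ennreal (?C * (u powr (a + b - 1) * Beta a b))"
    using \<Gamma> by (simp add: nn_integral_powr_Beta a b u ennreal_mult'[symmetric])
  also have "?C * (u powr (a + b - 1) * Beta a b) = gamma_density (a + b) u"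
    using \<Gamma> u by (simp add: gamma_density_def Beta_def field_simps)
  finally show ?thesis .
next
  case False
  then have "(\<lambda>s. ennreal (gamma_density a s * gamma_density b (u - s))) = (\<lambda>_. 0)"
    by (auto simp: gamma_density_def)
  then show ?thesis using False unfolding gamma_density_def[of "a + b"] by simp
qed

lemma nn_integral_gamma_density_sum:
  fixes a b :: real and H :: "real \<Rightarrow> ennreal"
  assumes a: "a > 0" and b: "b > 0" and H[measurable]: "H \<in> borel_measurable borel"
  shows "(\<integral>\<^sup>+s. \<integral>\<^sup>+t. ennreal (gamma_density a s * gamma_density b t) * H (s + t) \<partial>lborel \<partial>lborel) =
         (\<integral>\<^sup>+u. ennreal (gamma_density (a + b) u) * H u \<partial>lborel)"
proof -
  have shift: "(\<integral>\<^sup>+t. ennreal (gamma_density a s * gamma_density b t) * H (s + t) \<partial>lborel) =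
      (\<integral>\<^sup>+u. ennreal (gamma_density a s * gamma_density b (u - s)) * H u \<partial>lborel)" for s
  proof -
    have "(\<integral>\<^sup>+t. ennreal (gamma_density a s * gamma_density b t) * H (s + t) \<partial>distr lborel borel ((+) (-s))) =
          (\<integral>\<^sup>+u. ennreal (gamma_density a s * gamma_density b (u - s)) * H u \<partial>lborel)"
      by (subst nn_integral_distr) (auto intro!: nn_integral_cong)
    then show ?thesis by (simp add: lborel_distr_plus)
  qed
  have "(\<integral>\<^sup>+s. \<integral>\<^sup>+t. ennreal (gamma_density a s * gamma_density b t) * H (s + t) \<partial>lborel \<partial>lborel) =
        (\<integral>\<^sup>+u. \<integral>\<^sup>+s. ennreal (gamma_density a s * gamma_density b (u - s)) * H u \<partial>lborel \<partial>lborel)"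
    unfolding shift by (rule lborel_pair.Fubini') measurable
  also have "\<dots> = (\<integral>\<^sup>+u. ennreal (gamma_density (a + b) u) * H u \<partial>lborel)"
    by (intro nn_integral_cong, subst nn_integral_multc)
       (auto simp: nn_integral_gamma_density_convolution a b)
  finally show ?thesis .
qed

lemma nn_integral_gamma_density_half_sum:
  fixes H :: "real \<Rightarrow> ennreal"
  assumes [measurable]: "H \<in> borel_measurable borel"
  shows "(\<integral>\<^sup>+s. \<integral>\<^sup>+t. ennreal (gamma_density (real k + 1/2) s * gamma_density (real l + 1/2) t) *
            H (s + t) \<partial>lborel \<partial>lborel) =
         (\<integral>\<^sup>+u. ennreal (erlang_density (k + l) 1 u) * H u \<partial>lborel)"
proof -
  have shape: "real k + 1/2 + (real l + 1/2) = real (k + l) + 1"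
    by simp
  have "(\<integral>\<^sup>+s. \<integral>\<^sup>+t. ennreal (gamma_density (real k + 1/2) s * gamma_density (real l + 1/2) t) *
            H (s + t) \<partial>lborel \<partial>lborel) =
        (\<integral>\<^sup>+u. ennreal (gamma_density (real (k + l) + 1) u) * H u \<partial>lborel)"
    unfolding shape[symmetric] by (rule nn_integral_gamma_density_sum) auto
  also have "\<dots> = (\<integral>\<^sup>+u. ennreal (erlang_density (k + l) 1 u) * H u \<partial>lborel)"
    by (intro nn_integral_cong_AE eventually_mono[OF AE_lborel_singleton[of 0]])
       (simp add: gamma_density_of_nat_plus_1[of _ "k + l", simplified])
  finally show ?thesis .
qed

lemma Gamma_of_nat_plus_half: "Gamma (real k + 1/2) = fact (2 * k) * sqrt pi / (4 ^ k * fact k)"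
proof -
  have "(1/2 :: real) \<notin> \<int>\<^sub>\<le>\<^sub>0"
    by (auto elim!: nonpos_Ints_cases)
  then have "Gamma (real k + 1/2) = pochhammer (1/2) k * sqrt pi"
    using pochhammer_Gamma[of "1/2 :: real" k] by (simp add: Gamma_one_half_real add.commute)
  moreover have "(4 :: real) ^ k = (2 ^ k)\<^sup>2"
    by (simp add: power2_eq_square flip: power_mult_distrib)
  ultimately show ?thesis
    using fact_double[of k, where 'a=real] by (simp add: power_mult field_simps)
qed

lemma nn_integral_gamma_density_square:
  fixes b c :: real and h :: "real \<Rightarrow> ennreal"
  assumes c: "c > 0" and h[measurable]: "h \<in> borel_measurable borel"
  shows "(\<integral>\<^sup>+a. ennreal (gamma_density b (c * a\<^sup>2) * (2 * c * a)) * h (a\<^sup>2) * indicator {0<..} a \<partial>lborel) =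
         (\<integral>\<^sup>+t. ennreal (gamma_density b t) * h (t / c) \<partial>lborel)"
proof -
  have "(\<integral>\<^sup>+t. ennreal (gamma_density b t) * h (t / c) \<partial>lborel) =
        (\<integral>\<^sup>+t. ennreal (gamma_density b t) * h (t / c) * indicator {0..} t \<partial>lborel)"
    by (intro nn_integral_cong) (simp add: gamma_density_def indicator_def)
  also have "\<dots> = (\<integral>\<^sup>+a. ennreal (gamma_density b (c * a\<^sup>2)) * h (a\<^sup>2) * ennreal (2 * c * a) *
                          indicator {0..} a \<partial>lborel)"
    using nn_integral_substitution_square[OF c, of "\<lambda>t. ennreal (gamma_density b t) * h (t / c)"] c
    by simp
  also have "\<dots> = (\<integral>\<^sup>+a. ennreal (gamma_density b (c * a\<^sup>2) * (2 * c * a)) * h (a\<^sup>2) *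
                          indicator {0<..} a \<partial>lborel)"
  proof (intro nn_integral_cong)
    fix a :: real
    show "ennreal (gamma_density b (c * a\<^sup>2)) * h (a\<^sup>2) * ennreal (2 * c * a) * indicator {0..} a =
          ennreal (gamma_density b (c * a\<^sup>2) * (2 * c * a)) * h (a\<^sup>2) * indicator {0<..} a"
    proof (cases "a > 0")
      case True
      then have "ennreal (gamma_density b (c * a\<^sup>2) * (2 * c * a)) =
                 ennreal (gamma_density b (c * a\<^sup>2)) * ennreal (2 * c * a)"
        using c by (intro ennreal_mult'') simp
      then show ?thesis
        using True by (simp add: indicator_def mult_ac)
    qed (auto simp: indicator_def)
  qed
  finally show ?thesis ..
qed

section \<open>Noncentral chi-square laws as Poisson mixtures\<close>

lemma poisson_pmf_val_nonneg: "\<mu> \<ge> 0 \<Longrightarrow> poisson_pmf_val \<mu> k \<ge> 0"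
  by (simp add: poisson_pmf_val_def)

lemma poisson_pmf_val_convolution:
  "(\<Sum>k\<le>n. poisson_pmf_val \<mu> k * poisson_pmf_val \<nu> (n - k)) = poisson_pmf_val (\<mu> + \<nu>) n"
proof -
  have "poisson_pmf_val \<mu> k * poisson_pmf_val \<nu> (n - k) =
        exp (- (\<mu> + \<nu>)) / fact n * (real (n choose k) * \<mu> ^ k * \<nu> ^ (n - k))" if "k \<le> n" for k
    using that by (simp add: poisson_pmf_val_def binomial_fact exp_add[symmetric] field_simps)
  then have "(\<Sum>k\<le>n. poisson_pmf_val \<mu> k * poisson_pmf_val \<nu> (n - k)) =
             exp (- (\<mu> + \<nu>)) / fact n * (\<mu> + \<nu>) ^ n"
    by (simp add: sum_distrib_left binomial_ring)
  then show ?thesis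
    by (simp add: poisson_pmf_val_def)
qed

lemma suminf_poisson_pmf_val_add:
  fixes E :: "nat \<Rightarrow> ennreal"
  assumes "\<mu> \<ge> 0" and "\<nu> \<ge> 0"
  shows "(\<Sum>k. \<Sum>l. ennreal (poisson_pmf_val \<mu> k * poisson_pmf_val \<nu> l) * E (k + l)) =
         (\<Sum>n. ennreal (poisson_pmf_val (\<mu> + \<nu>) n) * E n)"
proof -
  have "(\<Sum>k\<le>n. ennreal (poisson_pmf_val \<mu> k * poisson_pmf_val \<nu> (n - k))) =
        ennreal (poisson_pmf_val (\<mu> + \<nu>) n)" for n
    using assms by (subst sum_ennreal) (simp_all add: poisson_pmf_val_nonneg poisson_pmf_val_convolution)
  then show ?thesis
    unfolding suminf_ennreal_diagonal by (simp flip: sum_distrib_right)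
qed

lemma cosh_sums_even_powers: "(\<lambda>k. z ^ (2 * k) / fact (2 * k)) sums cosh (z :: real)"
proof -
  have "(\<lambda>k. (\<lambda>n. if even n then z ^ n / fact n else 0) (2 * k)) sums cosh z
        \<longleftrightarrow> (\<lambda>n. if even n then z ^ n / fact n else 0) sums cosh z"
    by (rule sums_mono_reindex) (auto simp: strict_mono_def elim!: evenE)
  moreover have "(\<lambda>n. if even n then z ^ n /\<^sub>R fact n else 0) = (\<lambda>n. if even n then z ^ n / fact n else 0)"
    by (rule ext) (simp add: divide_inverse_commute)
  ultimately show ?thesis
    using cosh_converges[of z] by (simp add: divide_inverse mult.commute)
qed

lemma normal_density_fold:
  fixes x \<sigma> a c :: real
  assumes \<sigma>: "\<sigma> > 0" and c: "c = 1 / (2 * \<sigma>\<^sup>2)"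
  shows "normal_density x \<sigma> a + normal_density x \<sigma> (- a) =
         2 * sqrt c / sqrt pi * exp (- (a\<^sup>2 + x\<^sup>2) * c) * cosh (2 * c * a * x)"
proof -
  have "1 / sqrt (2 * pi * \<sigma>\<^sup>2) = sqrt c / sqrt pi"
    using \<sigma> by (simp add: c real_sqrt_mult real_sqrt_divide field_simps)
  moreover have "exp (- (a - x)\<^sup>2 / (2 * \<sigma>\<^sup>2)) = exp (- (a\<^sup>2 + x\<^sup>2) * c) * exp (2 * c * a * x)"
    and "exp (- (- a - x)\<^sup>2 / (2 * \<sigma>\<^sup>2)) = exp (- (a\<^sup>2 + x\<^sup>2) * c) * exp (- (2 * c * a * x))"
    unfolding exp_add[symmetric] using \<sigma> by (simp_all add: c field_simps power2_eq_square)
  ultimately show ?thesis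
    by (simp add: normal_density_def cosh_def algebra_simps)
qed

lemma poisson_pmf_val_mult_gamma_density_half:
  fixes x a c :: real
  assumes c: "c > 0" and a: "a > 0"
  shows "poisson_pmf_val (c * x\<^sup>2) k * gamma_density (real k + 1/2) (c * a\<^sup>2) * (2 * c * a) =
         2 * sqrt c / sqrt pi * exp (- (a\<^sup>2 + x\<^sup>2) * c) * ((2 * c * a * x) ^ (2 * k) / fact (2 * k))"
proof -
  have ca: "c * a\<^sup>2 > 0" using c a by simp
  have "(c * a\<^sup>2) powr (real k + 1/2 - 1) = (c * a\<^sup>2) powr (real k) / (c * a\<^sup>2) powr (1/2)"
    using ca by (simp add: powr_diff[symmetric])
  also have "\<dots> = (c * a\<^sup>2) ^ k / (sqrt c * a)"
    using ca a c by (simp add: powr_realpow powr_half_sqrt real_sqrt_mult)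
  finally have pow: "(c * a\<^sup>2) powr (real k + 1/2 - 1) = (c * a\<^sup>2) ^ k / (sqrt c * a)" .
  have "(2 * c * a * x) ^ (2 * k) = ((2 * c * a * x)\<^sup>2) ^ k"
    by (simp add: power_mult)
  also have "(2 * c * a * x)\<^sup>2 = 4 * (c * x\<^sup>2) * (c * a\<^sup>2)"
    by (simp add: power2_eq_square)
  finally have quad: "(2 * c * a * x) ^ (2 * k) = 4 ^ k * (c * x\<^sup>2) ^ k * (c * a\<^sup>2) ^ k"
    by (simp add: power_mult_distrib)
  have ex: "exp (- (c * x\<^sup>2)) * exp (- (c * a\<^sup>2)) = exp (- (a\<^sup>2 + x\<^sup>2) * c)"
    by (simp add: algebra_simps flip: exp_add)
  have "poisson_pmf_val (c * x\<^sup>2) k * gamma_density (real k + 1/2) (c * a\<^sup>2) * (2 * c * a) =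
        (exp (- (c * x\<^sup>2)) * exp (- (c * a\<^sup>2))) * (4 ^ k * (c * x\<^sup>2) ^ k * (c * a\<^sup>2) ^ k)
          * (2 * c * a) / (sqrt c * a) / (fact (2 * k) * sqrt pi)"
    using ca unfolding poisson_pmf_val_def gamma_density_def pow Gamma_of_nat_plus_half
    by (simp add: field_simps)
  also have "\<dots> = 2 * sqrt c / sqrt pi * exp (- (a\<^sup>2 + x\<^sup>2) * c) * ((2 * c * a * x) ^ (2 * k) / fact (2 * k))"
    unfolding ex quad[symmetric] using a c
    by (simp add: field_simps power2_eq_square)
  finally show ?thesis .
qed

lemma normal_density_fold_sums:
  fixes x \<sigma> a c :: real
  assumes \<sigma>: "\<sigma> > 0" and a: "a > 0" and c: "c = 1 / (2 * \<sigma>\<^sup>2)"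
  shows "(\<lambda>k. poisson_pmf_val (c * x\<^sup>2) k * gamma_density (real k + 1/2) (c * a\<^sup>2) * (2 * c * a))
           sums (normal_density x \<sigma> a + normal_density x \<sigma> (- a))"
proof -
  have c0: "c > 0"
    using \<sigma> by (simp add: c)
  show ?thesis
    unfolding poisson_pmf_val_mult_gamma_density_half[OF c0 a] normal_density_fold[OF \<sigma> c]
    by (intro sums_mult cosh_sums_even_powers)
qed

lemma nn_integral_normal_density_square:
  fixes x \<sigma> :: real and h :: "real \<Rightarrow> ennreal"
  assumes \<sigma>: "\<sigma> > 0" and h[measurable]: "h \<in> borel_measurable borel"
  shows "(\<integral>\<^sup>+a. ennreal (normal_density x \<sigma> a) * h (a\<^sup>2) \<partial>lborel) =
         (\<Sum>k. ennreal (poisson_pmf_val (x\<^sup>2 / (2 * \<sigma>\<^sup>2)) k) *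
              (\<integral>\<^sup>+t. ennreal (gamma_density (real k + 1/2) t) * h (2 * \<sigma>\<^sup>2 * t) \<partial>lborel))"
proof -
  define c where "c = 1 / (2 * \<sigma>\<^sup>2)"
  have c: "c > 0" and scale: "t / c = 2 * \<sigma>\<^sup>2 * t" and rate: "x\<^sup>2 / (2 * \<sigma>\<^sup>2) = c * x\<^sup>2" for t
    using \<sigma> by (simp_all add: c_def)
  define P where "P k = poisson_pmf_val (c * x\<^sup>2) k" for k
  define g where "g k a = gamma_density (real k + 1/2) (c * a\<^sup>2) * (2 * c * a)" for k a
  have nonneg: "P k \<ge> 0" "a > 0 \<Longrightarrow> g k a \<ge> 0" for k a
    using c by (simp_all add: P_def g_def poisson_pmf_val_nonneg gamma_density_nonneg)
  have "(\<integral>\<^sup>+a. ennreal (normal_density x \<sigma> a) * h (a\<^sup>2) \<partial>lborel) =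
        (\<integral>\<^sup>+a. ennreal (normal_density x \<sigma> a + normal_density x \<sigma> (- a)) * h (a\<^sup>2) * indicator {0<..} a \<partial>lborel)"
    by (subst nn_integral_lborel_fold) (auto simp: ennreal_plus distrib_right)
  also have "\<dots> = (\<integral>\<^sup>+a. (\<Sum>k. ennreal (P k) * (ennreal (g k a) * h (a\<^sup>2) * indicator {0<..} a)) \<partial>lborel)"
  proof (intro nn_integral_cong)
    fix a :: real
    show "ennreal (normal_density x \<sigma> a + normal_density x \<sigma> (- a)) * h (a\<^sup>2) * indicator {0<..} a =
          (\<Sum>k. ennreal (P k) * (ennreal (g k a) * h (a\<^sup>2) * indicator {0<..} a))"
    proof (cases "a > 0")
      case True
      then have "(\<Sum>k. ennreal (P k * g k a)) = ennreal (normal_density x \<sigma> a + normal_density x \<sigma> (- a))"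
        using normal_density_fold_sums[OF \<sigma> True c_def] nonneg
        by (intro suminf_ennreal_eq) (auto simp: P_def g_def mult.assoc)
      then show ?thesis
        using True nonneg by (simp add: ennreal_mult ennreal_suminf_multc flip: mult.assoc)
    qed simp
  qed
  also have "\<dots> = (\<Sum>k. ennreal (P k) * (\<integral>\<^sup>+a. ennreal (g k a) * h (a\<^sup>2) * indicator {0<..} a \<partial>lborel))"
    by (simp add: g_def nn_integral_suminf nn_integral_cmult)
  also have "\<dots> = (\<Sum>k. ennreal (P k) *
      (\<integral>\<^sup>+t. ennreal (gamma_density (real k + 1/2) t) * h (2 * \<sigma>\<^sup>2 * t) \<partial>lborel))"
    unfolding g_def nn_integral_gamma_density_square[OF c h] scale ..
  finally show ?thesis
    by (simp add: P_def rate)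
qed

text \<open>The Poisson weights of the two coordinates convolve, and two Gamma(k + 1/2) laws add up
  to an Erlang law.\<close>

lemma nn_integral_normal_density_sum_squares:
  fixes x y \<sigma> :: real and h :: "real \<Rightarrow> ennreal"
  assumes \<sigma>: "\<sigma> > 0" and h[measurable]: "h \<in> borel_measurable borel"
  shows "(\<integral>\<^sup>+a. ennreal (normal_density x \<sigma> a) *
            (\<integral>\<^sup>+b. ennreal (normal_density y \<sigma> b) * h (a\<^sup>2 + b\<^sup>2) \<partial>lborel) \<partial>lborel) =
         (\<Sum>n. ennreal (poisson_pmf_val ((x\<^sup>2 + y\<^sup>2) / (2 * \<sigma>\<^sup>2)) n) *
            (\<integral>\<^sup>+u. ennreal (erlang_density n 1 u) * h (2 * \<sigma>\<^sup>2 * u) \<partial>lborel))"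
proof -
  define \<tau> where "\<tau> = 2 * \<sigma>\<^sup>2"
  define g where "g k = gamma_density (real k + 1/2)" for k :: nat
  define Px where "Px = poisson_pmf_val (x\<^sup>2 / \<tau>)"
  define Py where "Py = poisson_pmf_val (y\<^sup>2 / \<tau>)"
  have "(\<integral>\<^sup>+a. ennreal (normal_density x \<sigma> a) *
            (\<integral>\<^sup>+b. ennreal (normal_density y \<sigma> b) * h (a\<^sup>2 + b\<^sup>2) \<partial>lborel) \<partial>lborel) =
        (\<integral>\<^sup>+a. ennreal (normal_density x \<sigma> a) *
            (\<Sum>l. ennreal (Py l) * (\<integral>\<^sup>+t. ennreal (g l t) * h (a\<^sup>2 + \<tau> * t) \<partial>lborel)) \<partial>lborel)"
    using nn_integral_normal_density_square[OF \<sigma>, of "\<lambda>r. h (_ + r)" y]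
    by (simp add: Py_def g_def \<tau>_def add.commute)
  also have "\<dots> = (\<Sum>l. ennreal (Py l) * (\<integral>\<^sup>+a. ennreal (normal_density x \<sigma> a) *
            (\<integral>\<^sup>+t. ennreal (g l t) * h (a\<^sup>2 + \<tau> * t) \<partial>lborel) \<partial>lborel))"
    by (rule nn_integral_mult_suminf) (auto simp: g_def)
  also have "\<dots> = (\<Sum>l. ennreal (Py l) * (\<integral>\<^sup>+t. ennreal (g l t) *
            (\<integral>\<^sup>+a. ennreal (normal_density x \<sigma> a) * h (a\<^sup>2 + \<tau> * t) \<partial>lborel) \<partial>lborel))"
    by (subst lborel_nn_integral_mult_swap) (simp_all add: g_def)
  also have "\<dots> = (\<Sum>l. ennreal (Py l) * (\<Sum>k. ennreal (Px k) * (\<integral>\<^sup>+t. ennreal (g l t) *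
            (\<integral>\<^sup>+w. ennreal (g k w) * h (\<tau> * w + \<tau> * t) \<partial>lborel) \<partial>lborel)))"
    using nn_integral_normal_density_square[OF \<sigma>, of "\<lambda>r. h (r + _)" x]
    by (simp add: Px_def g_def \<tau>_def nn_integral_mult_suminf)
  also have "\<dots> = (\<Sum>l. \<Sum>k. ennreal (Py l * Px k) * (\<integral>\<^sup>+u. ennreal (erlang_density (l + k) 1 u) * h (\<tau> * u) \<partial>lborel))"
  proof -
    have "(\<integral>\<^sup>+t. ennreal (g l t) * (\<integral>\<^sup>+w. ennreal (g k w) * h (\<tau> * w + \<tau> * t) \<partial>lborel) \<partial>lborel) =
          (\<integral>\<^sup>+u. ennreal (erlang_density (l + k) 1 u) * h (\<tau> * u) \<partial>lborel)" for k l
      using nn_integral_gamma_density_half_sum[of "\<lambda>u. h (\<tau> * u)" l k]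
      by (simp add: g_def gamma_density_nonneg ennreal_mult' distrib_left add.commute mult_ac
                    flip: nn_integral_cmult)
    moreover have "Px k \<ge> 0" "Py l \<ge> 0" for k l
      by (simp_all add: Px_def Py_def poisson_pmf_val_nonneg \<tau>_def)
    ultimately show ?thesis
      by (simp add: ennreal_mult mult.assoc flip: ennreal_suminf_cmult)
  qed
  also have "\<dots> = (\<Sum>n. ennreal (poisson_pmf_val ((x\<^sup>2 + y\<^sup>2) / (2 * \<sigma>\<^sup>2)) n) *
            (\<integral>\<^sup>+u. ennreal (erlang_density n 1 u) * h (2 * \<sigma>\<^sup>2 * u) \<partial>lborel))"
    unfolding Px_def Py_def
    by (subst suminf_poisson_pmf_val_add) (simp_all add: \<tau>_def add_divide_distrib add.commute)
  finally show ?thesis .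
qed

section \<open>Comparing two Erlang variables\<close>

lemma borel_measurable_erlang_CDF[measurable]: "erlang_CDF k l \<in> borel_measurable borel"
  unfolding erlang_CDF_def by measurable

lemma nn_integral_erlang_density_lessThan:
  assumes "0 < l"
  shows "(\<integral>\<^sup>+u. ennreal (erlang_density k l u) * indicator {..<s} u \<partial>lborel) = ennreal (erlang_CDF k l s)"
proof -
  have "(\<integral>\<^sup>+u. ennreal (erlang_density k l u) * indicator {..<s} u \<partial>lborel) =
        (\<integral>\<^sup>+u. ennreal (erlang_density k l u) * indicator {..s} u \<partial>lborel)"
    by (intro nn_integral_cong_AE eventually_mono[OF AE_lborel_singleton[of s]])
       (auto simp: indicator_def)
  then show ?thesis
    using nn_integral_erlang_density[OF assms] by simp
qed

lemma erlang_CDF_sums: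
  assumes s: "s \<ge> 0"
  shows "(\<lambda>n. s ^ (n + Suc j) * exp (- s) / fact (n + Suc j)) sums erlang_CDF j 1 s"
proof -
  have "(\<lambda>n. s ^ (n + Suc j) / fact (n + Suc j)) sums (exp s - (\<Sum>m<Suc j. s ^ m / fact m))"
    using exp_converges[of s] sums_iff_shift[of "\<lambda>m. s ^ m / fact m" "Suc j"]
    by (simp add: field_simps)
  then have "(\<lambda>n. exp (- s) * (s ^ (n + Suc j) / fact (n + Suc j))) sums
             (exp (- s) * (exp s - (\<Sum>m<Suc j. s ^ m / fact m)))"
    by (rule sums_mult)
  moreover have "exp (- s) * (exp s - (\<Sum>m<Suc j. s ^ m / fact m)) = erlang_CDF j 1 s"
    using s by (simp add: erlang_CDF_def right_diff_distrib sum_distrib_left exp_minus field_simps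
                          lessThan_Suc_atMost)
  ultimately show ?thesis
    by (simp add: mult_ac)
qed

lemma nn_integral_erlang_density_mult_poisson:
  "(\<integral>\<^sup>+s. ennreal (erlang_density i 1 s * (s ^ m * exp (- s) / fact m)) \<partial>lborel) =
   ennreal (real ((i + m) choose i) / 2 ^ (i + m + 1))"
proof -
  have "erlang_density i 1 s * (s ^ m * exp (- s) / fact m) =
        real ((i + m) choose i) / 2 ^ (i + m + 1) * erlang_density (i + m) 2 s" for s
  proof (cases "s < 0")
    case False
    have "exp (- s) * exp (- s) = exp (- (2 * s))"
      by (simp flip: exp_add)
    then show ?thesis
      using False by (simp add: erlang_density_def binomial_fact field_simps power_add)
  qed (simp add: erlang_density_def)
  then have "(\<integral>\<^sup>+s. ennreal (erlang_density i 1 s * (s ^ m * exp (- s) / fact m)) \<partial>lborel) =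
             (\<integral>\<^sup>+s. ennreal (real ((i + m) choose i) / 2 ^ (i + m + 1)) *
                    ennreal (erlang_density (i + m) 2 s * s ^ 0) \<partial>lborel)"
    by (intro nn_integral_cong) (simp flip: ennreal_mult')
  also have "\<dots> = ennreal (real ((i + m) choose i) / 2 ^ (i + m + 1))"
    using nn_integral_erlang_ith_moment[of 2 "i + m" 0] by (simp add: nn_integral_cmult)
  finally show ?thesis .
qed

lemma nn_integral_erlang_density_erlang_CDF_series:
  "(\<integral>\<^sup>+s. ennreal (erlang_density i 1 s) * ennreal (erlang_CDF j 1 s) \<partial>lborel) =
   (\<Sum>n. ennreal (real ((i + j + 1 + n) choose i) / 2 ^ (i + j + 2 + n)))"
proof -
  have "ennreal (erlang_density i 1 s) * ennreal (erlang_CDF j 1 s) =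
        (\<Sum>n. ennreal (erlang_density i 1 s * (s ^ (n + Suc j) * exp (- s) / fact (n + Suc j))))" for s
  proof (cases "s < 0")
    case False
    then have "(\<lambda>n. erlang_density i 1 s * (s ^ (n + Suc j) * exp (- s) / fact (n + Suc j))) sums
               (erlang_density i 1 s * erlang_CDF j 1 s)"
      by (intro sums_mult erlang_CDF_sums) simp
    then show ?thesis
      using False by (subst suminf_ennreal_eq) (auto simp: ennreal_mult)
  qed (simp add: erlang_density_def)
  then have "(\<integral>\<^sup>+s. ennreal (erlang_density i 1 s) * ennreal (erlang_CDF j 1 s) \<partial>lborel) =
             (\<Sum>n. \<integral>\<^sup>+s. ennreal (erlang_density i 1 s * (s ^ (n + Suc j) * exp (- s) / fact (n + Suc j))) \<partial>lborel)"
    by (simp add: nn_integral_suminf)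
  also have "\<dots> = (\<Sum>n. ennreal (real ((i + j + 1 + n) choose i) / 2 ^ (i + j + 2 + n)))"
    unfolding nn_integral_erlang_density_mult_poisson by (simp add: ac_simps)
  finally show ?thesis .
qed

lemma pochhammer_of_nat_Suc: "pochhammer (real (Suc k)) n = fact (k + n) / fact k"
proof -
  have "pochhammer (1 :: real) (k + n) = pochhammer 1 k * pochhammer (1 + real k) n"
    by (simp add: pochhammer_product')
  then have "fact (k + n) = fact k * pochhammer (real (Suc k)) n"
    by (simp add: pochhammer_fact add.commute)
  then show ?thesis
    by (simp add: field_simps)
qed

lemma binomial_half_power_eq_hyp2F1_summand:
  "real ((i + j + 1 + n) choose i) / 2 ^ (i + j + 2 + n) =
   (1/2) ^ ((i + 1) + (j + 1)) * real (((i + 1) + (j + 1) - 1) choose (j + 1)) *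
   (pochhammer 1 n * pochhammer (real ((i + 1) + (j + 1))) n /
     (pochhammer (real ((j + 1) + 1)) n * fact n) * (1/2) ^ n)"
proof -
  have p1: "pochhammer (real ((i + 1) + (j + 1))) n = fact (i + j + 1 + n) / fact (i + j + 1)"
    using pochhammer_of_nat_Suc[of "i + j + 1" n] by (simp add: ac_simps)
  have p2: "pochhammer (real ((j + 1) + 1)) n = fact (j + 1 + n) / fact (j + 1)"
    using pochhammer_of_nat_Suc[of "j + 1" n] by (simp add: ac_simps)
  have b1: "real (((i + 1) + (j + 1) - 1) choose (j + 1)) = fact (i + j + 1) / (fact (j + 1) * fact i)"
    using binomial_fact[of "j + 1" "i + j + 1", where 'a=real] by simp
  have b2: "real ((i + j + 1 + n) choose i) = fact (i + j + 1 + n) / (fact i * fact (j + 1 + n))"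
    using binomial_fact[of i "i + j + 1 + n", where 'a=real] by simp
  have "(1/2 :: real) ^ ((i + 1) + (j + 1)) * (1/2) ^ n = 1 / 2 ^ (i + j + 2 + n)"
    by (simp add: power_one_over ac_simps flip: power_add)
  then show ?thesis
    unfolding p1 p2 b1 b2 pochhammer_fact[symmetric]
    by (simp del: fact_Suc add: field_simps)
qed

text \<open>The paper's I_{i,j}: the probability that an Erlang variable of shape i + 1 exceeds an
  independent one of shape j + 1.\<close>

definition erlang_exceed_prob :: "nat \<Rightarrow> nat \<Rightarrow> real" where
  "erlang_exceed_prob i j = (1/2) ^ ((i + 1) + (j + 1)) * real (((i + 1) + (j + 1) - 1) choose (j + 1)) *
     hyp2F1 1 (real ((i + 1) + (j + 1))) (real ((j + 1) + 1)) (1/2)"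

lemma erlang_exceed_prob_sums:
  "(\<lambda>n. real ((i + j + 1 + n) choose i) / 2 ^ (i + j + 2 + n)) sums erlang_exceed_prob i j"
proof -
  define T where "T n = real ((i + j + 1 + n) choose i) / 2 ^ (i + j + 2 + n)" for n
  define C where "C = (1/2 :: real) ^ ((i + 1) + (j + 1)) * real (((i + 1) + (j + 1) - 1) choose (j + 1))"
  define h where "h n = pochhammer 1 n * pochhammer (real ((i + 1) + (j + 1))) n /
                          (pochhammer (real ((j + 1) + 1)) n * fact n) * (1/2 :: real) ^ n" for n
  have T: "T n = C * h n" for n
    unfolding T_def C_def h_def by (simp only: binomial_half_power_eq_hyp2F1_summand mult.assoc)
  have C: "C > 0"
    by (simp add: C_def del: binomial_Suc_Suc)
  have "(\<Sum>n. ennreal (T n)) = (\<integral>\<^sup>+s. ennreal (erlang_density i 1 s) * ennreal (erlang_CDF j 1 s) \<partial>lborel)"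
    unfolding T_def by (rule nn_integral_erlang_density_erlang_CDF_series[symmetric])
  \<comment> \<open>The series in hyp2F1 converges because it is a probability; otherwise its suminf would be junk.\<close>
  also have "\<dots> \<le> (\<integral>\<^sup>+s. ennreal (erlang_density i 1 s * s ^ 0) \<partial>lborel)"
    by (intro nn_integral_mono) (auto simp: erlang_CDF_def intro!: mult_left_le sum_nonneg)
  also have "\<dots> = 1"
    using nn_integral_erlang_ith_moment[of 1 i 0] by simp
  finally have "summable T"
    by (intro summable_suminf_not_top) (auto simp: T_def top_unique)
  then have "summable (\<lambda>n. C * h n)"
    by (simp only: T [symmetric])
  then have "summable h"
    using C by (simp add: summable_cmult_iff)
  then have "(\<lambda>n. C * h n) sums (C * (\<Sum>n. h n))"
    by (intro sums_mult summable_sums)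
  also have "C * (\<Sum>n. h n) = erlang_exceed_prob i j"
    unfolding erlang_exceed_prob_def C_def h_def hyp2F1_def ..
  finally show ?thesis
    by (simp only: T_def [symmetric] T)
qed

lemma erlang_exceed_prob_nonneg: "0 \<le> erlang_exceed_prob i j"
  by (rule sums_le[OF _ sums_zero erlang_exceed_prob_sums]) simp

lemma nn_integral_erlang_density_erlang_CDF:
  "(\<integral>\<^sup>+s. ennreal (erlang_density i 1 s) * ennreal (erlang_CDF j 1 s) \<partial>lborel) =
   ennreal (erlang_exceed_prob i j)"
  unfolding nn_integral_erlang_density_erlang_CDF_series
  by (rule suminf_ennreal_eq[OF _ erlang_exceed_prob_sums]) simp

section \<open>Independent coordinates\<close>

lemma (in prob_space) emeasure_indep_vars_preimage:
  assumes indep: "indep_vars N X I" and "I \<noteq> {}"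
    and rv: "\<And>i. i \<in> I \<Longrightarrow> random_variable (N i) (X i)"
    and S: "S \<in> sets (\<Pi>\<^sub>M i\<in>I. N i)"
  shows "emeasure M ((\<lambda>\<omega>. \<lambda>i\<in>I. X i \<omega>) -` S \<inter> space M) = emeasure (\<Pi>\<^sub>M i\<in>I. distr M (N i) (X i)) S"
proof -
  have "(\<lambda>\<omega>. \<lambda>i\<in>I. X i \<omega>) \<in> measurable M (\<Pi>\<^sub>M i\<in>I. N i)"
    using rv by (intro measurable_restrict) auto
  then show ?thesis
    using indep_vars_iff_distr_eq_PiM'[OF \<open>I \<noteq> {}\<close> rv] indep S
    by (simp add: emeasure_distr[symmetric])
qed

lemma emeasure_PiM_4:
  fixes M :: "nat \<Rightarrow> real measure" and Q :: "real \<times> real \<times> real \<times> real \<Rightarrow> bool"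
  assumes "product_sigma_finite M" and [measurable_cong]: "\<And>i. sets (M i) = sets borel"
    and [measurable]: "Measurable.pred borel Q"
  shows "emeasure (\<Pi>\<^sub>M i\<in>{0..<4}. M i) {z \<in> space (\<Pi>\<^sub>M i\<in>{0..<4}. M i). Q (z 0, z 1, z 2, z 3)} =
         (\<integral>\<^sup>+a. \<integral>\<^sup>+b. \<integral>\<^sup>+c. \<integral>\<^sup>+d. of_bool (Q (a, b, c, d)) \<partial>M 3 \<partial>M 2 \<partial>M 1 \<partial>M 0)"
proof -
  interpret product_sigma_finite M by fact
  let ?S = "{z \<in> space (\<Pi>\<^sub>M i\<in>{0..<4}. M i). Q (z 0, z 1, z 2, z 3)}"
  have "?S \<in> sets (\<Pi>\<^sub>M i\<in>{0..<4}. M i)"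
    by measurable
  then have "emeasure (\<Pi>\<^sub>M i\<in>{0..<4}. M i) ?S = (\<integral>\<^sup>+z. indicator ?S z \<partial>(\<Pi>\<^sub>M i\<in>{0..<4}. M i))"
    by simp
  also have "\<dots> = (\<integral>\<^sup>+z. of_bool (Q (z 0, z 1, z 2, z 3)) \<partial>(\<Pi>\<^sub>M i\<in>{0..<4}. M i))"
    by (intro nn_integral_cong) (simp add: indicator_def)
  finally have "emeasure (\<Pi>\<^sub>M i\<in>{0..<4}. M i) ?S = (\<integral>\<^sup>+z. of_bool (Q (z 0, z 1, z 2, z 3)) \<partial>(\<Pi>\<^sub>M i\<in>{0..<4}. M i))" .
  moreover have "{0..<4 :: nat} = insert 0 (insert 1 (insert 2 {3}))"
    by auto
  ultimately show ?thesis
    by (simp add: product_nn_integral_insert_rev space_PiM_empty)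
qed

lemma (in prob_space) emeasure_indep_vars_4:
  fixes X1 X2 X3 X4 :: "'a \<Rightarrow> real" and f1 f2 f3 f4 :: "real \<Rightarrow> ennreal"
    and Q :: "real \<times> real \<times> real \<times> real \<Rightarrow> bool"
  assumes X1: "distributed M lborel X1 f1" and X2: "distributed M lborel X2 f2"
    and X3: "distributed M lborel X3 f3" and X4: "distributed M lborel X4 f4"
    and indep: "indep_vars (\<lambda>_. borel) (\<lambda>i. [X1, X2, X3, X4] ! i) {0..<4}"
    and Q[measurable]: "Measurable.pred borel Q"
  shows "emeasure M {\<omega> \<in> space M. Q (X1 \<omega>, X2 \<omega>, X3 \<omega>, X4 \<omega>)} =
    (\<integral>\<^sup>+a. f1 a * (\<integral>\<^sup>+b. f2 b * (\<integral>\<^sup>+c. f3 c * (\<integral>\<^sup>+d. f4 d * of_bool (Q (a, b, c, d))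
       \<partial>lborel) \<partial>lborel) \<partial>lborel) \<partial>lborel)"
proof -
  define I where "I = {0..<4::nat}"
  \<comment> \<open>Clamping the index extends the family to all of nat, as the product locale requires.\<close>
  define X where "X i = [X1, X2, X3, X4] ! min i 3" for i
  define D where "D i = distr M borel (X i)" for i
  have rv[measurable]: "X i \<in> borel_measurable M" for i
  proof -
    have "min i 3 = 0 \<or> min i 3 = 1 \<or> min i 3 = 2 \<or> min i 3 = 3"
      by auto
    then show ?thesis
      using X1 X2 X3 X4 by (auto simp: X_def dest: distributed_measurable)
  qed
  interpret D: product_prob_space D
    by (rule product_prob_spaceI) (simp add: D_def prob_space_distr)
  have sets_D[measurable_cong]: "sets (D i) = sets borel" for i
    by (simp add: D_def)
  have density_D: "D 0 = density lborel f1" "D (Suc 0) = density lborel f2"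
                  "D 2 = density lborel f3" "D 3 = density lborel f4"
    using X1 X2 X3 X4
    by (auto simp: D_def X_def numeral_eq_Suc intro: trans[OF distr_cong distributed_distr_eq_density])
  have space_eq: "space (\<Pi>\<^sub>M i\<in>I. D i) = space (\<Pi>\<^sub>M i\<in>I. borel)"
    by (intro sets_eq_imp_space_eq sets_PiM_cong) (auto simp: sets_D)
  define S where "S = {z \<in> space (\<Pi>\<^sub>M i\<in>I. D i). Q (z 0, z 1, z 2, z 3)}"
  have S: "S \<in> sets (\<Pi>\<^sub>M i\<in>I. borel)"
    unfolding S_def space_eq unfolding I_def by measurable
  have event: "{\<omega> \<in> space M. Q (X1 \<omega>, X2 \<omega>, X3 \<omega>, X4 \<omega>)} = (\<lambda>\<omega>. \<lambda>i\<in>I. X i \<omega>) -` S \<inter> space M"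
    by (auto simp: S_def I_def X_def D_def space_PiM)
  have "indep_vars (\<lambda>_. borel) X I"
    using indep by (rule indep_vars_cong[THEN iffD1, rotated -1]) (auto simp: I_def X_def)
  then have "emeasure M {\<omega> \<in> space M. Q (X1 \<omega>, X2 \<omega>, X3 \<omega>, X4 \<omega>)} = emeasure (\<Pi>\<^sub>M i\<in>I. D i) S"
    unfolding event D_def by (rule emeasure_indep_vars_preimage) (use S in \<open>auto simp: I_def\<close>)
  also have "\<dots> = (\<integral>\<^sup>+a. \<integral>\<^sup>+b. \<integral>\<^sup>+c. \<integral>\<^sup>+d. of_bool (Q (a, b, c, d)) \<partial>D 3 \<partial>D 2 \<partial>D 1 \<partial>D 0)"
    unfolding S_def I_def by (rule emeasure_PiM_4) (auto simp: sets_D D.product_sigma_finite_axioms)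
  also have "\<dots> = (\<integral>\<^sup>+a. f1 a * (\<integral>\<^sup>+b. f2 b * (\<integral>\<^sup>+c. f3 c * (\<integral>\<^sup>+d. f4 d * of_bool (Q (a, b, c, d))
       \<partial>lborel) \<partial>lborel) \<partial>lborel) \<partial>lborel)"
    using X1 X2 X3 X4 by (simp add: density_D nn_integral_density distributed_borel_measurable)
  finally show ?thesis .
qed

section \<open>The decoding order error probability\<close>

lemma nn_integral_normal_density_sum_squares_less:
  fixes x y \<sigma> r :: real
  assumes \<sigma>: "\<sigma> > 0"
  shows "(\<integral>\<^sup>+a. ennreal (normal_density x \<sigma> a) *
            (\<integral>\<^sup>+b. ennreal (normal_density y \<sigma> b) * of_bool (a\<^sup>2 + b\<^sup>2 < r) \<partial>lborel) \<partial>lborel) =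
         (\<Sum>n. ennreal (poisson_pmf_val ((x\<^sup>2 + y\<^sup>2) / (2 * \<sigma>\<^sup>2)) n) *
            ennreal (erlang_CDF n 1 (r / (2 * \<sigma>\<^sup>2))))"
proof -
  have "indicator {..<r} (2 * \<sigma>\<^sup>2 * u) = (indicator {..<r / (2 * \<sigma>\<^sup>2)} u :: ennreal)" for u
    using \<sigma> by (simp add: indicator_def field_simps)
  then have "(\<integral>\<^sup>+u. ennreal (erlang_density n 1 u) * indicator {..<r} (2 * \<sigma>\<^sup>2 * u) \<partial>lborel) =
             ennreal (erlang_CDF n 1 (r / (2 * \<sigma>\<^sup>2)))" for n
    by (simp add: nn_integral_erlang_density_lessThan)
  moreover have "indicator {..<r} (a\<^sup>2 + b\<^sup>2) = (of_bool (a\<^sup>2 + b\<^sup>2 < r) :: ennreal)" for a b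
    by (simp add: indicator_def)
  ultimately show ?thesis
    using nn_integral_normal_density_sum_squares[OF \<sigma>, of "indicator {..<r}" x y] by simp
qed

lemma (in prob_space) emeasure_normal_norm_gt:
  fixes x1 y1 x2 y2 \<sigma> :: real and X1 Y1 X2 Y2 :: "'a \<Rightarrow> real"
  assumes \<sigma>: "\<sigma> > 0"
    and "distributed M lborel X1 (normal_density x1 \<sigma>)" "distributed M lborel Y1 (normal_density y1 \<sigma>)"
    and "distributed M lborel X2 (normal_density x2 \<sigma>)" "distributed M lborel Y2 (normal_density y2 \<sigma>)"
    and "indep_vars (\<lambda>_. borel) (\<lambda>i. [X1, Y1, X2, Y2] ! i) {0..<4}"
  shows "emeasure M {\<omega> \<in> space M. sqrt ((X1 \<omega>)\<^sup>2 + (Y1 \<omega>)\<^sup>2) > sqrt ((X2 \<omega>)\<^sup>2 + (Y2 \<omega>)\<^sup>2)} =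
    (\<Sum>i. \<Sum>j. ennreal (poisson_pmf_val ((x1\<^sup>2 + y1\<^sup>2) / (2 * \<sigma>\<^sup>2)) i *
                         poisson_pmf_val ((x2\<^sup>2 + y2\<^sup>2) / (2 * \<sigma>\<^sup>2)) j * erlang_exceed_prob i j))"
proof -
  define \<tau> where "\<tau> = 2 * \<sigma>\<^sup>2"
  have \<tau>: "\<tau> > 0" using \<sigma> by (simp add: \<tau>_def)
  define P1 where "P1 = poisson_pmf_val ((x1\<^sup>2 + y1\<^sup>2) / \<tau>)"
  define P2 where "P2 = poisson_pmf_val ((x2\<^sup>2 + y2\<^sup>2) / \<tau>)"
  have P_nonneg: "P1 i \<ge> 0" "P2 i \<ge> 0" for i
    using \<tau> by (simp_all add: P1_def P2_def poisson_pmf_val_nonneg)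
  define G where "G r = (\<Sum>j. ennreal (P2 j) * ennreal (erlang_CDF j 1 (r / \<tau>)))" for r
  have [measurable]: "G \<in> borel_measurable borel"
    unfolding G_def by measurable
  have event_measurable: "Measurable.pred borel (\<lambda>(a, b, c, d). c\<^sup>2 + d\<^sup>2 < a\<^sup>2 + (b :: real)\<^sup>2)"
    unfolding borel_prod[symmetric] by measurable
  have "emeasure M {\<omega> \<in> space M. sqrt ((X1 \<omega>)\<^sup>2 + (Y1 \<omega>)\<^sup>2) > sqrt ((X2 \<omega>)\<^sup>2 + (Y2 \<omega>)\<^sup>2)} =
        emeasure M {\<omega> \<in> space M. (\<lambda>(a, b, c, d). c\<^sup>2 + d\<^sup>2 < a\<^sup>2 + b\<^sup>2) (X1 \<omega>, Y1 \<omega>, X2 \<omega>, Y2 \<omega>)}"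
    by simp
  also have "\<dots> = (\<integral>\<^sup>+a. ennreal (normal_density x1 \<sigma> a) *
                    (\<integral>\<^sup>+b. ennreal (normal_density y1 \<sigma> b) * G (a\<^sup>2 + b\<^sup>2) \<partial>lborel) \<partial>lborel)"
    using emeasure_indep_vars_4[OF assms(2-) event_measurable]
    by (simp add: G_def P2_def \<tau>_def nn_integral_normal_density_sum_squares_less[OF \<sigma>])
  also have "\<dots> = (\<Sum>i. ennreal (P1 i) * (\<integral>\<^sup>+s. ennreal (erlang_density i 1 s) * G (\<tau> * s) \<partial>lborel))"
    using nn_integral_normal_density_sum_squares[OF \<sigma>, of G x1 y1] by (simp add: P1_def \<tau>_def)
  also have "\<dots> = (\<Sum>i. ennreal (P1 i) * (\<Sum>j. ennreal (P2 j) * ennreal (erlang_exceed_prob i j)))"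
    using \<tau> by (simp add: G_def nn_integral_mult_suminf nn_integral_erlang_density_erlang_CDF)
  also have "\<dots> = (\<Sum>i. \<Sum>j. ennreal (P1 i * P2 j * erlang_exceed_prob i j))"
    by (simp add: P_nonneg erlang_exceed_prob_nonneg ennreal_mult mult.assoc flip: ennreal_suminf_cmult)
  finally show ?thesis
    by (simp add: P1_def P2_def \<tau>_def)
qed

theorem lemma1:
  fixes M :: "'a measure"
    and x1 y1 x2 y2 \<sigma> :: real
    and X1 Y1 X2 Y2 :: "'a \<Rightarrow> real"
  assumes "prob_space M"
    and "\<sigma> > 0"
    and "sqrt (x1^2 + y1^2) < sqrt (x2^2 + y2^2)"
    and "distributed M lborel X1 (normal_density x1 \<sigma>)"
    and "distributed M lborel Y1 (normal_density y1 \<sigma>)"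
    and "distributed M lborel X2 (normal_density x2 \<sigma>)"
    and "distributed M lborel Y2 (normal_density y2 \<sigma>)"
    and "prob_space.indep_vars M (\<lambda>_. borel) (\<lambda>i. [X1, Y1, X2, Y2] ! i) {0..<4}"
  shows "measure M {\<omega> \<in> space M.
            sqrt ((X1 \<omega>)^2 + (Y1 \<omega>)^2) > sqrt ((X2 \<omega>)^2 + (Y2 \<omega>)^2)}
       = (let \<beta> = 1 / (2 * \<sigma>^2);
              lam1 = (sqrt (x1^2 + y1^2))^2;
              lam2 = (sqrt (x2^2 + y2^2))^2
          in (\<Sum>i. \<Sum>j. poisson_pmf_val (lam1 * \<beta>) i * poisson_pmf_val (lam2 * \<beta>) j *
                 ((1/2) ^ ((i+1) + (j+1)) * real (((i+1) + (j+1) - 1) choose (j+1))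
                  * hyp2F1 1 (real ((i+1) + (j+1))) (real ((j+1) + 1)) (1/2))))"
proof -
  \<comment> \<open>The hypothesis d_1 < d_2 only decides which order is the wrong one; the formula does not need it.\<close>
  interpret prob_space M by fact
  let ?A = "{\<omega> \<in> space M. sqrt ((X1 \<omega>)\<^sup>2 + (Y1 \<omega>)\<^sup>2) > sqrt ((X2 \<omega>)\<^sup>2 + (Y2 \<omega>)\<^sup>2)}"
  define f where "f i j = poisson_pmf_val ((x1\<^sup>2 + y1\<^sup>2) / (2 * \<sigma>\<^sup>2)) i *
                          poisson_pmf_val ((x2\<^sup>2 + y2\<^sup>2) / (2 * \<sigma>\<^sup>2)) j * erlang_exceed_prob i j" for i j
  have f_nonneg: "0 \<le> f i j" for i j
    by (simp add: f_def poisson_pmf_val_nonneg erlang_exceed_prob_nonneg)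
  have "emeasure M ?A = (\<Sum>i. \<Sum>j. ennreal (f i j))"
    unfolding f_def using assms(2,4-) by (rule emeasure_normal_norm_gt)
  then have "measure M ?A = (\<Sum>i. \<Sum>j. f i j)"
    using emeasure_finite[of ?A] by (simp add: measure_def enn2real_suminf_suminf f_nonneg)
  then show ?thesis
    by (simp add: Let_def f_def erlang_exceed_prob_def)
qed

end
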